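(* Let $\mathfrak a$ be an ideal of a commutative ring $R$. (1) Let $f,g_1,\dots,g_k\in R[X]$ be monic with $f=g_1\cdots g_k$. If each $g_i$ is $\mathfrak a$-Weierstrass, then $f$ is $\mathfrak a$-Weierstrass. (2) Let $f,g_1,\dots,g_k\in R[[X]]$ with $f=g_1\cdots g_k$ and let $n\ge0$. If each $g_i$ is $\mathfrak a$-distinguished of order $n_i$ for some integers $n_i\ge0$ with $n=n_1+\cdots+n_k$, then $f$ is $\mathfrak a$-distinguished of order $n$. Moreover, if $\mathfrak a$ is prime, the converses of (1) and (2) hold: in (1), if $f$ is $\mathfrak a$-Weierstrass then each $g_i$ is $\mathfrak a$-Weierstrass; in (2), if $f$ is $\mathfrak a$-distinguished of order $n$ then each $g_i$ is $\mathfrak a$-distinguished of some order $n_i$ with $n=n_1+\cdots+n_k$.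
   Context: A polynomial $f\in R[X]$ is $\mathfrak a$-Weierstrass if it is monic and its coefficients of $X^i$ for $i<\deg f$ lie in $\mathfrak a$. A series $f\in R[[X]]$ is $\mathfrak a$-distinguished of order $n$ if the coefficient of $X^n$ is a unit modulo $\mathfrak a$ and the coefficients of $X^i$ for $i<n$ lie in $\mathfrak a$. *)

theory Defs
  imports "HOL-Computational_Algebra.Polynomial" "HOL-Computational_Algebra.Formal_Power_Series"
begin

definition is_ideal :: "'a::comm_ring_1 set \<Rightarrow> bool" where
  "is_ideal I \<longleftrightarrow> 0 \<in> I \<and> (\<forall>x\<in>I. \<forall>y\<in>I. x + y \<in> I) \<and> (\<forall>r. \<forall>x\<in>I. r * x \<in> I)"

definition is_prime_ideal :: "'a::comm_ring_1 set \<Rightarrow> bool" where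
  "is_prime_ideal I \<longleftrightarrow> is_ideal I \<and> I \<noteq> UNIV \<and> (\<forall>x y. x * y \<in> I \<longrightarrow> x \<in> I \<or> y \<in> I)"

definition unit_mod :: "'a::comm_ring_1 set \<Rightarrow> 'a \<Rightarrow> bool" where
  "unit_mod I c \<longleftrightarrow> (\<exists>u. c * u - 1 \<in> I)"

definition monic_poly :: "'a::comm_ring_1 poly \<Rightarrow> bool" where
  "monic_poly p \<longleftrightarrow> lead_coeff p = 1"

definition weierstrass :: "'a::comm_ring_1 set \<Rightarrow> 'a poly \<Rightarrow> bool" where
  "weierstrass I f \<longleftrightarrow> monic_poly f \<and> (\<forall>i < degree f. coeff f i \<in> I)"

definition distinguished :: "'a::comm_ring_1 set \<Rightarrow> 'a fps \<Rightarrow> nat \<Rightarrow> bool" where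
  "distinguished I f n \<longleftrightarrow> unit_mod I (fps_nth f n) \<and> (\<forall>i < n. fps_nth f i \<in> I)"

end

theory Submission
  imports Defs "HOL-Computational_Algebra.Polynomial_FPS"
begin

unbundle fps_syntax

text \<open>
  If the coefficients of \<open>f\<close> below \<open>m\<close> and those of \<open>g\<close> below \<open>n\<close> lie in \<open>a\<close>, then every term
  of the convolution for the coefficients of \<open>f g\<close> up to \<open>X\<^sup>m\<^sup>+\<^sup>n\<close> has a factor in \<open>a\<close>, except
  \<open>f\<^sub>m g\<^sub>n\<close> in degree \<open>m + n\<close>. Hence distinguished orders add, with leading residues multiplying.
  If \<open>a\<close> is prime, let \<open>n\<^sub>i\<close> be the index of the first coefficient of \<open>g\<^sub>i\<close> outside \<open>a\<close> (it
  exists because \<open>f\<close> has one). The coefficient of \<open>f\<close> at \<open>\<Sum> n\<^sub>i\<close> is then congruent to a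
  product of elements outside \<open>a\<close>, hence outside \<open>a\<close>, which forces \<open>\<Sum> n\<^sub>i = n\<close>; and factors
  of a unit modulo \<open>a\<close> are units modulo \<open>a\<close>.
  A monic polynomial is \<open>a\<close>-Weierstrass iff it is \<open>a\<close>-distinguished of order its degree, and
  degrees of monic polynomials add. This reduces the polynomial statements to the series ones; for
  the converse, \<open>n\<^sub>i \<le> deg g\<^sub>i\<close> together with \<open>\<Sum> n\<^sub>i = \<Sum> deg g\<^sub>i\<close> gives \<open>n\<^sub>i = deg g\<^sub>i\<close>.
\<close>

lemma is_ideal_zero: "is_ideal I \<Longrightarrow> 0 \<in> I"
  by (simp add: is_ideal_def)

lemma is_ideal_add: "is_ideal I \<Longrightarrow> x \<in> I \<Longrightarrow> y \<in> I \<Longrightarrow> x + y \<in> I"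
  by (simp add: is_ideal_def)

lemma is_ideal_mult_left: "is_ideal I \<Longrightarrow> x \<in> I \<Longrightarrow> r * x \<in> I"
  by (simp add: is_ideal_def)

lemma is_ideal_mult_right: "is_ideal I \<Longrightarrow> x \<in> I \<Longrightarrow> x * r \<in> I"
  by (metis is_ideal_mult_left mult.commute)

lemma is_ideal_diff: "is_ideal I \<Longrightarrow> x \<in> I \<Longrightarrow> y \<in> I \<Longrightarrow> x - y \<in> I"
  using is_ideal_add[of I x "(-1) * y"] is_ideal_mult_left[of I y "-1"] by simp

lemma is_ideal_sum: "is_ideal I \<Longrightarrow> (\<And>x. x \<in> S \<Longrightarrow> f x \<in> I) \<Longrightarrow> sum f S \<in> I"
  by (induction S rule: infinite_finite_induct) (auto simp: is_ideal_zero is_ideal_add)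

lemma prime_ideal_one_notin: "is_prime_ideal I \<Longrightarrow> 1 \<notin> I"
  unfolding is_prime_ideal_def using is_ideal_mult_right[of I 1] by auto

lemma prime_ideal_prod_notin:
  assumes "is_prime_ideal I" "finite S" "\<And>i. i \<in> S \<Longrightarrow> c i \<notin> I"
  shows "prod c S \<notin> I"
  using assms(2,3)
  by (induction S rule: finite_induct)
     (use assms(1) prime_ideal_one_notin in \<open>auto simp: is_prime_ideal_def\<close>)

lemma unit_mod_one: "is_ideal I \<Longrightarrow> unit_mod I 1"
  unfolding unit_mod_def using is_ideal_zero by (metis diff_self mult_1)

lemma unit_mod_notin:
  assumes I: "is_ideal I" and "1 \<notin> I" "unit_mod I c"
  shows "c \<notin> I"
proof
  assume "c \<in> I"
  obtain u where "c * u - 1 \<in> I"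
    using assms(3) by (auto simp: unit_mod_def)
  with is_ideal_diff[OF I is_ideal_mult_right[OF I \<open>c \<in> I\<close>]] have "c * u - (c * u - 1) \<in> I" .
  with assms(2) show False by simp
qed

lemma unit_mod_cong:
  assumes I: "is_ideal I" and "x - y \<in> I" "unit_mod I y"
  shows "unit_mod I x"
proof -
  obtain u where u: "y * u - 1 \<in> I"
    using assms(3) by (auto simp: unit_mod_def)
  have "(x - y) * u + (y * u - 1) \<in> I"
    using is_ideal_add[OF I is_ideal_mult_right[OF I assms(2)] u] .
  moreover have "(x - y) * u + (y * u - 1) = x * u - 1"
    by (simp add: algebra_simps)
  ultimately show ?thesis
    by (auto simp: unit_mod_def)
qed

lemma unit_mod_mult:
  assumes I: "is_ideal I" and "unit_mod I x" "unit_mod I y"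
  shows "unit_mod I (x * y)"
proof -
  obtain u v where u: "x * u - 1 \<in> I" and v: "y * v - 1 \<in> I"
    using assms(2,3) by (auto simp: unit_mod_def)
  have "(x * u - 1) * (y * v) + (y * v - 1) \<in> I"
    using is_ideal_add[OF I is_ideal_mult_right[OF I u] v] .
  moreover have "(x * u - 1) * (y * v) + (y * v - 1) = (x * y) * (u * v) - 1"
    by (simp add: algebra_simps)
  ultimately show ?thesis
    by (auto simp: unit_mod_def)
qed

lemma unit_mod_prod: "is_ideal I \<Longrightarrow> (\<And>i. i \<in> S \<Longrightarrow> unit_mod I (c i)) \<Longrightarrow> unit_mod I (prod c S)"
  by (induction S rule: infinite_finite_induct) (auto simp: unit_mod_one unit_mod_mult)

lemma unit_mod_multD: "unit_mod I (x * y) \<Longrightarrow> unit_mod I x"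
  unfolding unit_mod_def by (metis mult.assoc)

lemma unit_mod_prodD: "finite S \<Longrightarrow> i \<in> S \<Longrightarrow> unit_mod I (prod c S) \<Longrightarrow> unit_mod I (c i)"
  by (metis prod.remove unit_mod_multD)

lemma fps_mult_nth_mod_ideal:
  fixes f g :: "'a::comm_ring_1 fps"
  assumes I: "is_ideal I" and f: "\<forall>i<m. f $ i \<in> I" and g: "\<forall>i<n. g $ i \<in> I"
  shows "\<forall>j<m + n. (f * g) $ j \<in> I" and "(f * g) $ (m + n) - f $ m * g $ n \<in> I"
proof -
  have summand: "f $ i * g $ (j - i) \<in> I" if "i \<le> j" "j \<le> m + n" "i \<noteq> m \<or> j \<noteq> m + n" for i j
  proof (cases "i < m")
    case True
    then show ?thesis using f is_ideal_mult_right[OF I] by blast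
  next
    case False
    then have "j - i < n" using that by auto
    then show ?thesis using g is_ideal_mult_left[OF I] by blast
  qed
  show "\<forall>j<m + n. (f * g) $ j \<in> I"
    by (auto simp: fps_mult_nth intro!: is_ideal_sum[OF I] summand)
  have "(f * g) $ (m + n) = f $ m * g $ n + (\<Sum>i\<in>{0..m + n} - {m}. f $ i * g $ (m + n - i))"
    by (simp add: fps_mult_nth sum.remove[of _ m])
  moreover have "(\<Sum>i\<in>{0..m + n} - {m}. f $ i * g $ (m + n - i)) \<in> I"
    by (auto intro!: is_ideal_sum[OF I] summand)
  ultimately show "(f * g) $ (m + n) - f $ m * g $ n \<in> I"
    by simp
qed

lemma fps_mult_nth_in_ideal_left:
  "is_ideal I \<Longrightarrow> \<forall>i. f $ i \<in> I \<Longrightarrow> (f * g) $ j \<in> I"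
  using fps_mult_nth_mod_ideal(1)[of I "Suc j" f 0 g] by simp

lemma fps_prod_nth_mod_ideal:
  fixes g :: "'i \<Rightarrow> 'a::comm_ring_1 fps"
  assumes I: "is_ideal I" and "finite S" and low: "\<forall>i\<in>S. \<forall>j<ns i. g i $ j \<in> I"
  shows "(\<forall>j<(\<Sum>i\<in>S. ns i). (\<Prod>i\<in>S. g i) $ j \<in> I) \<and>
         (\<Prod>i\<in>S. g i) $ (\<Sum>i\<in>S. ns i) - (\<Prod>i\<in>S. g i $ ns i) \<in> I"
  using assms(2,3)
proof (induction S rule: finite_induct)
  case empty
  then show ?case by (simp add: is_ideal_zero[OF I])
next
  case (insert x S)
  let ?P = "\<Prod>i\<in>S. g i" and ?m = "\<Sum>i\<in>S. ns i" and ?c = "\<Prod>i\<in>S. g i $ ns i"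
  from insert have IH: "\<forall>j<?m. ?P $ j \<in> I" "?P $ ?m - ?c \<in> I" by auto
  have gx: "\<forall>j<ns x. g x $ j \<in> I" using insert.prems by auto
  note prod = fps_mult_nth_mod_ideal[OF I IH(1) gx]
  have "(?P * g x) $ (?m + ns x) - ?P $ ?m * g x $ ns x + (?P $ ?m - ?c) * g x $ ns x \<in> I"
    using is_ideal_add[OF I prod(2) is_ideal_mult_right[OF I IH(2)]] .
  with prod(1) insert.hyps show ?case
    by (simp add: algebra_simps)
qed

lemma distinguished_prod:
  assumes I: "is_ideal I" and "finite S" and g: "\<forall>i\<in>S. distinguished I (g i) (ns i)"
  shows "distinguished I (\<Prod>i\<in>S. g i) (\<Sum>i\<in>S. ns i)"
proof -
  have low: "\<forall>i\<in>S. \<forall>j<ns i. g i $ j \<in> I"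
    using g by (simp add: distinguished_def)
  have "unit_mod I (\<Prod>i\<in>S. g i $ ns i)"
    using g by (intro unit_mod_prod[OF I]) (simp add: distinguished_def)
  with fps_prod_nth_mod_ideal[OF I \<open>finite S\<close> low] show ?thesis
    unfolding distinguished_def using unit_mod_cong[OF I] by blast
qed

lemma fps_prod_factor_nth_notin_ideal:
  assumes I: "is_ideal I" and "finite S" "i \<in> S" "(\<Prod>i\<in>S. g i) $ n \<notin> I"
  shows "\<exists>j. g i $ j \<notin> I"
proof (rule ccontr)
  assume "\<not> ?thesis"
  then have "(g i * (\<Prod>i\<in>S - {i}. g i)) $ n \<in> I"
    using fps_mult_nth_in_ideal_left[OF I] by blast
  with assms(2-4) show False
    by (simp add: prod.remove)
qed

lemma distinguished_prod_factors:
  assumes P: "is_prime_ideal I" and "finite S" and f: "distinguished I (\<Prod>i\<in>S. g i) n"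
  shows "\<exists>ns. (\<forall>i\<in>S. distinguished I (g i) (ns i)) \<and> n = (\<Sum>i\<in>S. ns i)"
proof -
  have I: "is_ideal I"
    using P unfolding is_prime_ideal_def by blast
  note one = prime_ideal_one_notin[OF P]
  let ?f = "\<Prod>i\<in>S. g i"
  have fn: "?f $ n \<notin> I"
    using f unit_mod_notin[OF I one] by (simp add: distinguished_def)
  define ns where "ns i = (LEAST j. g i $ j \<notin> I)" for i
  have ns_notin: "g i $ ns i \<notin> I" if "i \<in> S" for i
    unfolding ns_def by (rule LeastI_ex[OF fps_prod_factor_nth_notin_ideal[OF I \<open>finite S\<close> that fn]])
  have low: "\<forall>i\<in>S. \<forall>j<ns i. g i $ j \<in> I"
    unfolding ns_def using not_less_Least by blast
  let ?s = "\<Sum>i\<in>S. ns i" and ?c = "\<Prod>i\<in>S. g i $ ns i"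
  have f_low: "\<forall>j<?s. ?f $ j \<in> I" and f_s: "?f $ ?s - ?c \<in> I"
    using fps_prod_nth_mod_ideal[OF I \<open>finite S\<close> low] by blast+
  have c: "?c \<notin> I"
    by (rule prime_ideal_prod_notin[OF P \<open>finite S\<close> ns_notin])
  have "?f $ ?s \<notin> I"
  proof
    assume "?f $ ?s \<in> I"
    from is_ideal_diff[OF I this f_s] c show False by simp
  qed
  moreover have "\<forall>j<n. ?f $ j \<in> I"
    using f by (simp add: distinguished_def)
  ultimately have sum_ns: "?s = n"
    using f_low fn by (meson linorder_neqE_nat)
  have "?c - ?f $ n \<in> I"
    using is_ideal_diff[OF I is_ideal_zero[OF I] f_s] sum_ns by simp
  then have "unit_mod I ?c"
    using f unit_mod_cong[OF I] unfolding distinguished_def by blast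
  then have "\<forall>i\<in>S. unit_mod I (g i $ ns i)"
    using unit_mod_prodD[OF \<open>finite S\<close>] by blast
  with low sum_ns show ?thesis
    unfolding distinguished_def by blast
qed

lemma monic_poly_mult:
  assumes "monic_poly p" "monic_poly q"
  shows "monic_poly (p * q) \<and> degree (p * q) = degree p + degree q"
proof (cases "(1::'a) = 0")
  case True
  then have "\<And>x::'a. x = 0" by (metis mult_1_right mult_zero_right)
  then have "p = 0" "q = 0" by (auto simp: poly_eq_iff)
  with True show ?thesis by (simp add: monic_poly_def)
next
  case False
  have c: "coeff (p * q) (degree p + degree q) = 1"
    using assms by (simp add: coeff_mult_degree_sum monic_poly_def)
  then have "degree (p * q) = degree p + degree q"
    using False degree_mult_le le_degree by (metis le_antisym)
  with c show ?thesis by (simp add: monic_poly_def)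
qed

lemma monic_poly_prod:
  assumes "\<forall>i\<in>S. monic_poly (g i)"
  shows "monic_poly (\<Prod>i\<in>S. g i) \<and> degree (\<Prod>i\<in>S. g i) = (\<Sum>i\<in>S. degree (g i))"
  using assms
proof (induction S rule: infinite_finite_induct)
  case (insert x S)
  then show ?case
    using monic_poly_mult[of "g x" "\<Prod>i\<in>S. g i"] by simp
qed (simp_all add: monic_poly_def)

lemma weierstrass_iff_distinguished:
  "is_ideal I \<Longrightarrow> weierstrass I p \<longleftrightarrow> monic_poly p \<and> distinguished I (fps_of_poly p) (degree p)"
  by (auto simp: weierstrass_def distinguished_def monic_poly_def unit_mod_one)

lemma distinguished_fps_of_poly_le_degree:
  assumes "is_ideal I" "1 \<notin> I" "distinguished I (fps_of_poly p) n"
  shows "n \<le> degree p"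
proof -
  have "coeff p n \<noteq> 0"
    using assms unit_mod_notin is_ideal_zero by (fastforce simp: distinguished_def)
  then show ?thesis by (rule le_degree)
qed

lemma weierstrass_prod:
  assumes I: "is_ideal I" and "finite S" "\<forall>i\<in>S. weierstrass I (g i)"
  shows "weierstrass I (\<Prod>i\<in>S. g i)"
proof -
  have monic: "monic_poly (\<Prod>i\<in>S. g i)" and deg: "degree (\<Prod>i\<in>S. g i) = (\<Sum>i\<in>S. degree (g i))"
    using monic_poly_prod[of S g] assms(3) by (auto simp: weierstrass_def)
  have "distinguished I (\<Prod>i\<in>S. fps_of_poly (g i)) (\<Sum>i\<in>S. degree (g i))"
    using assms by (intro distinguished_prod) (auto simp: weierstrass_iff_distinguished)
  with monic show ?thesis
    by (simp add: weierstrass_iff_distinguished[OF I] fps_of_poly_prod deg)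
qed

lemma weierstrass_prod_factors:
  assumes P: "is_prime_ideal I" and "finite S" "\<forall>i\<in>S. monic_poly (g i)"
    and f: "weierstrass I (\<Prod>i\<in>S. g i)"
  shows "\<forall>i\<in>S. weierstrass I (g i)"
proof -
  have I: "is_ideal I"
    using P unfolding is_prime_ideal_def by blast
  note one = prime_ideal_one_notin[OF P]
  have "distinguished I (\<Prod>i\<in>S. fps_of_poly (g i)) (\<Sum>i\<in>S. degree (g i))"
    using f monic_poly_prod[OF assms(3)] by (simp add: weierstrass_iff_distinguished[OF I] fps_of_poly_prod)
  then obtain ns where ns: "\<forall>i\<in>S. distinguished I (fps_of_poly (g i)) (ns i)"
    and sum_ns: "(\<Sum>i\<in>S. degree (g i)) = (\<Sum>i\<in>S. ns i)"
    using distinguished_prod_factors[OF P \<open>finite S\<close>] by blast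
  have le: "ns i \<le> degree (g i)" if "i \<in> S" for i
    using distinguished_fps_of_poly_le_degree[OF I one] ns that by blast
  have "ns i = degree (g i)" if "i \<in> S" for i
    using sum_mono_inv[OF sum_ns[symmetric] le that \<open>finite S\<close>] .
  with ns assms(3) show ?thesis
    by (simp add: weierstrass_iff_distinguished[OF I])
qed

theorem lemma3p10:
  fixes a :: "'a::comm_ring_1 set"
  assumes "is_ideal a"
  shows
   "(\<forall>(f::'a poly) (g::nat \<Rightarrow> 'a poly) (k::nat).
        monic_poly f \<and> (\<forall>i<k. monic_poly (g i)) \<and> f = (\<Prod>i<k. g i) \<and>
        (\<forall>i<k. weierstrass a (g i)) \<longrightarrow> weierstrass a f)
    \<and> (\<forall>(f::'a fps) (g::nat \<Rightarrow> 'a fps) (k::nat) (ns::nat \<Rightarrow> nat) (n::nat).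
        f = (\<Prod>i<k. g i) \<and> (\<forall>i<k. distinguished a (g i) (ns i)) \<and> n = (\<Sum>i<k. ns i)
        \<longrightarrow> distinguished a f n)
    \<and> (is_prime_ideal a \<longrightarrow>
        (\<forall>(f::'a poly) (g::nat \<Rightarrow> 'a poly) (k::nat).
          monic_poly f \<and> (\<forall>i<k. monic_poly (g i)) \<and> f = (\<Prod>i<k. g i) \<and>
          weierstrass a f \<longrightarrow> (\<forall>i<k. weierstrass a (g i)))
      \<and> (\<forall>(f::'a fps) (g::nat \<Rightarrow> 'a fps) (k::nat) (n::nat).
          f = (\<Prod>i<k. g i) \<and> distinguished a f n \<longrightarrow>
          (\<exists>ns::nat \<Rightarrow> nat. (\<forall>i<k. distinguished a (g i) (ns i)) \<and> n = (\<Sum>i<k. ns i))))"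
proof (intro conjI impI allI)
  fix f :: "'a poly" and g :: "nat \<Rightarrow> 'a poly" and k :: nat
  assume "monic_poly f \<and> (\<forall>i<k. monic_poly (g i)) \<and> f = (\<Prod>i<k. g i) \<and>
    (\<forall>i<k. weierstrass a (g i))"
  then show "weierstrass a f"
    using weierstrass_prod[OF assms finite_lessThan, where g = g] by auto
next
  fix f :: "'a fps" and g :: "nat \<Rightarrow> 'a fps" and k :: nat and ns :: "nat \<Rightarrow> nat" and n :: nat
  assume "f = (\<Prod>i<k. g i) \<and> (\<forall>i<k. distinguished a (g i) (ns i)) \<and> n = (\<Sum>i<k. ns i)"
  then show "distinguished a f n"
    using distinguished_prod[OF assms finite_lessThan, where g = g and ns = ns] by auto
next
  fix f :: "'a poly" and g :: "nat \<Rightarrow> 'a poly" and k i :: nat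
  assume "is_prime_ideal a" and "i < k"
    and "monic_poly f \<and> (\<forall>i<k. monic_poly (g i)) \<and> f = (\<Prod>i<k. g i) \<and> weierstrass a f"
  then show "weierstrass a (g i)"
    using weierstrass_prod_factors[OF _ finite_lessThan, where g = g] by auto
next
  fix f :: "'a fps" and g :: "nat \<Rightarrow> 'a fps" and k n :: nat
  assume "is_prime_ideal a" and "f = (\<Prod>i<k. g i) \<and> distinguished a f n"
  then show "\<exists>ns. (\<forall>i<k. distinguished a (g i) (ns i)) \<and> n = (\<Sum>i<k. ns i)"
    using distinguished_prod_factors[of a "{..<k}" g n] by (auto simp: Ball_def)
qed

end
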